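(* Let $k \geq 2$, $n \geq 1$, $\Sigma_k = \{0,1,\ldots,k-1\}$, and let $u \in \Sigma_k^n$ be primitive. Define the word $f_u$ symbol by symbol as follows: $f_u[i] = u[i]$ for $1 \leq i \leq n$; for $i \geq n+1$, if $f_u[i-n+1..i-1] = 0^{n-1}$ the construction terminates, and otherwise $f_u[i]$ is the smallest letter of $\Sigma_k$ such that $f_u[i-n+1..i]$ is primitive (such a letter always exists). Then $f_u$ is finite, i.e. the construction terminates after finitely many steps.
   Context: A word $w$ is primitive if there is no word $x$ and integer $p \geq 2$ with $w = x^p$. For a word $w$, $w[i]$ denotes its $i$-th symbol and $w[i..j] = w[i]w[i+1]\cdots w[j]$. *)

theory Defs
  imports Main
begin

definition primitive :: "nat list \<Rightarrow> bool" where
  "primitive w \<longleftrightarrow> \<not> (\<exists>x p. p \<ge> 2 \<and> w = concat (replicate p x))"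

text \<open>The last n-1 symbols of the current word, i.e. f[i-n+1..i-1] with i = length w + 1.\<close>
definition window :: "nat \<Rightarrow> nat list \<Rightarrow> nat list" where
  "window n w = drop (length w - (n - 1)) w"

definition stopped :: "nat \<Rightarrow> nat list \<Rightarrow> bool" where
  "stopped n w \<longleftrightarrow> window n w = replicate (n - 1) 0"

definition next_letter :: "nat \<Rightarrow> nat \<Rightarrow> nat list \<Rightarrow> nat" where
  "next_letter k n w = (LEAST a. a < k \<and> primitive (window n w @ [a]))"

definition fstep :: "nat \<Rightarrow> nat \<Rightarrow> nat list \<Rightarrow> nat list" where
  "fstep k n w = (if stopped n w then w else w @ [next_letter k n w])"

definition fu_iter :: "nat \<Rightarrow> nat list \<Rightarrow> nat \<Rightarrow> nat list" where
  "fu_iter k u m = (fstep k (length u) ^^ m) u"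

end

theory Submission
  imports Defs "HOL-Library.Sublist"
begin

text \<open>At most one one-letter extension v a of a word v is a proper power: two such powers
give v two periods d \<le> e dividing |v| + 1, and either d = e or the step of the Euclidean
algorithm (periods d < e with d + e \<le> |v| yield the period e - d) identifies both last letters
with the same letter of v. So for k \<ge> 2 a primitive extension always exists.

If the construction never stopped, it would produce an infinite word f without factor
0^(n-1). Let T \<le> n - 1 be least such that all sufficiently late factors of length T contain a
non-zero letter. By minimality, arbitrarily late factors 0^(T-1) are followed by a non-zero
letter; as that letter was chosen greedily, replacing it by 0 gives a word x^p with p \<ge> 2 ending
in 0^T. Periodicity with period |x| copies these trailing zeros to an earlier position of the
same word, which yields a late factor 0^T: a contradiction.\<close>

definition has_period :: "'a list \<Rightarrow> nat \<Rightarrow> bool" where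
  "has_period w d \<longleftrightarrow> (\<forall>i. i + d < length w \<longrightarrow> w ! i = w ! (i + d))"

lemma has_periodD: "has_period w d \<Longrightarrow> i + d < length w \<Longrightarrow> w ! i = w ! (i + d)"
  by (simp add: has_period_def)

lemma has_period_appendD:
  assumes "has_period (xs @ ys) d" shows "has_period xs d"
  unfolding has_period_def
proof (intro allI impI)
  fix i assume "i + d < length xs"
  with has_periodD[OF assms, of i] show "xs ! i = xs ! (i + d)" by (simp add: nth_append)
qed

lemma has_period_mult:
  assumes "has_period w d" and "i + c * d < length w"
  shows "w ! i = w ! (i + c * d)"
  using assms(2)
proof (induction c)
  case (Suc c)
  then have "w ! i = w ! (i + c * d)" by simp
  also have "\<dots> = w ! (i + Suc c * d)"
    using has_periodD[OF assms(1), of "i + c * d"] Suc.prems by (simp add: add_ac)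
  finally show ?case .
qed simp

lemma has_period_nth_mod:
  assumes "has_period w d" and "j < length w"
  shows "w ! j = w ! (j mod d)"
  using has_period_mult[OF assms(1), of "j mod d" "j div d"] assms(2)
  by (simp add: mod_div_mult_eq)

lemma has_period_nth_last_period:
  assumes "has_period w d" and "d dvd length w" and "0 < d" and "j < length w"
  shows "w ! j = w ! (length w - d + j mod d)"
proof -
  obtain c where c: "length w = Suc c * d"
    using assms(2,4) by (metis dvd_def mult.commute mult_0_right not0_implies_Suc not_less0)
  have "w ! (j mod d) = w ! (j mod d + c * d)"
    using has_period_mult[OF assms(1)] c assms(3) by simp
  also have "j mod d + c * d = length w - d + j mod d" using c by simp
  finally show ?thesis using has_period_nth_mod[OF assms(1,4)] by simp
qed

lemma has_period_diff:
  assumes d: "has_period w d" and e: "has_period w e"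
    and "d < e" and "d + e \<le> length w"
  shows "has_period w (e - d)"
  unfolding has_period_def
proof (intro allI impI)
  fix i assume i: "i + (e - d) < length w"
  show "w ! i = w ! (i + (e - d))"
  proof (cases "i + e < length w")
    case True
    then have "w ! i = w ! (i + (e - d) + d)"
      using has_periodD[OF e, of i] \<open>d < e\<close> by simp
    also have "\<dots> = w ! (i + (e - d))"
      using has_periodD[OF d, of "i + (e - d)"] True \<open>d < e\<close> by simp
    finally show ?thesis .
  next
    case False
    then have "d \<le> i" using assms(4) by linarith
    then have "w ! i = w ! (i - d)"
      using has_periodD[OF d, of "i - d"] i \<open>d < e\<close> by simp
    also have "\<dots> = w ! (i + (e - d))"
      using has_periodD[OF e, of "i - d"] i \<open>d \<le> i\<close> \<open>d < e\<close> by simp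
    finally show ?thesis .
  qed
qed

lemma nth_concat_replicate:
  "i < p * length x \<Longrightarrow> concat (replicate p x) ! i = x ! (i mod length x)"
proof (induction p arbitrary: i)
  case (Suc p)
  show ?case
  proof (cases "i < length x")
    case False
    then have "(i - length x) mod length x = i mod length x"
      by (simp add: le_mod_geq)
    with False Suc show ?thesis by (simp add: nth_append)
  qed (simp add: nth_append)
qed simp

lemma has_period_concat_replicate: "has_period (concat (replicate p x)) (length x)"
  unfolding has_period_def
  by (simp add: length_concat sum_list_replicate nth_concat_replicate)

lemma not_primitive_has_period:
  assumes "\<not> primitive w" and "w \<noteq> []"
  obtains d where "0 < d" and "d dvd length w" and "2 * d \<le> length w" and "has_period w d"
proof -
  obtain x p where "2 \<le> p" and w: "w = concat (replicate p x)"
    using assms(1) unfolding primitive_def by blast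
  then have len: "length w = p * length x"
    by (simp add: length_concat sum_list_replicate)
  show thesis
  proof
    show "0 < length x" using len assms(2) by (cases "length x") auto
    show "length x dvd length w" using len by simp
    show "2 * length x \<le> length w" using len \<open>2 \<le> p\<close> by simp
    show "has_period w (length x)" using w has_period_concat_replicate by simp
  qed
qed

lemma has_period_snoc_last:
  assumes "has_period (v @ [a]) d" and "0 < d" and "d \<le> length v"
  shows "a = v ! (length v - d)"
  using has_periodD[OF assms(1), of "length v - d"] assms(2,3)
  by (simp add: nth_append split: if_splits)

lemma has_period_snocs_last_eq:
  assumes d: "has_period (v @ [a]) d" "0 < d" "d dvd length v + 1"
    and e: "has_period (v @ [b]) e" "2 * e \<le> length v + 1" "e dvd length v + 1"
    and "d \<le> e"
  shows "a = b"
proof -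
  have "e \<le> length v" using e(2) d(2) \<open>d \<le> e\<close> by linarith
  then have a: "a = v ! (length v - d)" and b: "b = v ! (length v - e)"
    using has_period_snoc_last[OF d(1,2)] has_period_snoc_last[OF e(1)] d(2) \<open>d \<le> e\<close>
    by simp_all
  show ?thesis
  proof (cases "d = e")
    case False
    with \<open>d \<le> e\<close> have "d < e" by simp
    obtain p where p: "length v + 1 = d * p" using d(3) by blast
    have "3 \<le> p"
    proof (rule ccontr)
      assume "\<not> 3 \<le> p"
      then have "d * p \<le> d * 2" by simp
      with p e(2) \<open>d < e\<close> show False by linarith
    qed
    then have "d * 3 \<le> length v + 1" using p by (metis mult_le_mono2)
    with e(2) have "d + e \<le> length v" by linarith
    then have "has_period v (e - d)"
      using has_period_diff has_period_appendD d(1) e(1) \<open>d < e\<close> by blast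
    then have "v ! (length v - e) = v ! (length v - e + (e - d))"
      using \<open>d < e\<close> d(2) \<open>d + e \<le> length v\<close> by (intro has_periodD) auto
    with a b \<open>d < e\<close> \<open>d + e \<le> length v\<close> show ?thesis by simp
  qed (use a b in simp)
qed

lemma not_primitive_snoc_unique:
  assumes "\<not> primitive (v @ [a])" and "\<not> primitive (v @ [b])"
  shows "a = b"
proof -
  obtain d where d: "0 < d" "d dvd length v + 1" "2 * d \<le> length v + 1" "has_period (v @ [a]) d"
    using not_primitive_has_period[OF assms(1)] by auto
  obtain e where e: "0 < e" "e dvd length v + 1" "2 * e \<le> length v + 1" "has_period (v @ [b]) e"
    using not_primitive_has_period[OF assms(2)] by auto
  show ?thesis
    using has_period_snocs_last_eq[of v a d b e] has_period_snocs_last_eq[of v b e a d] d e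
    by (cases "d \<le> e") auto
qed

lemma exists_primitive_snoc:
  assumes "2 \<le> k" shows "\<exists>a<k. primitive (v @ [a])"
proof -
  have "primitive (v @ [0]) \<or> primitive (v @ [1])"
    using not_primitive_snoc_unique by fastforce
  with assms show ?thesis by (metis One_nat_def le_trans less_2_cases_iff not_less)
qed

lemma frequently_zero_block:
  fixes f :: "nat \<Rightarrow> nat" and L :: nat
  assumes forced: "\<forall>\<^sub>F s in sequentially.
    f (s + L) \<noteq> 0 \<longrightarrow> \<not> primitive (map f [s..<s + L] @ [0])"
  shows "\<exists>\<^sub>F s in sequentially. \<forall>i<L. f (s + i) = 0"
proof (rule ccontr)
  define P where "P T \<longleftrightarrow> (\<forall>\<^sub>F s in sequentially. \<exists>i<T. f (s + i) \<noteq> 0)" for T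
  assume "\<not> ?thesis"
  then have "P L" by (simp add: P_def not_frequently)
  define T where "T = (LEAST T. P T)"
  have "P T" and "T \<le> L" using \<open>P L\<close> LeastI Least_le unfolding T_def by metis+
  have "T \<noteq> 0"
  proof
    assume "T = 0"
    with \<open>P T\<close> show False by (simp add: P_def)
  qed
  then have "\<not> P (T - 1)" using not_less_Least[of "T - 1" P] unfolding T_def by simp
  obtain N where N: "\<And>s. N \<le> s \<Longrightarrow> (\<exists>i<T. f (s + i) \<noteq> 0) \<and>
      (f (s + L) \<noteq> 0 \<longrightarrow> \<not> primitive (map f [s..<s + L] @ [0]))"
    using eventually_conj[OF \<open>P T\<close>[unfolded P_def] forced] unfolding eventually_sequentially by blast
  from \<open>\<not> P (T - 1)\<close> obtain s where "N + L \<le> s" and zeros: "\<And>i. i < T - 1 \<Longrightarrow> f (s + i) = 0"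
    unfolding P_def not_eventually frequently_sequentially by auto
  define r where "r = s + (T - 1) - L"
  have "f (r + L) \<noteq> 0"
  proof -
    obtain i where "i < T" and "f (s + i) \<noteq> 0" using N[of s] \<open>N + L \<le> s\<close> by auto
    moreover from this zeros have "i = T - 1" by (metis Suc_pred' less_Suc_eq not_gr0 \<open>T \<noteq> 0\<close>)
    ultimately show ?thesis using \<open>N + L \<le> s\<close> unfolding r_def by simp
  qed
  define g where "g = map f [r..<r + L] @ [0]"
  have "\<not> primitive g" using N[of r] \<open>f (r + L) \<noteq> 0\<close> \<open>N + L \<le> s\<close> unfolding g_def r_def by auto
  then obtain d where "0 < d" and "d dvd L + 1" and "2 * d \<le> L + 1" and "has_period g d"
    by (rule not_primitive_has_period) (simp_all add: g_def)
  have g_zero: "g ! j = 0" if "L + 1 - T \<le> j" "j < L + 1" for j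
  proof (cases "j = L")
    case False
    have "r + j = s + (j - (L + 1 - T))"
      using that \<open>T \<le> L\<close> \<open>N + L \<le> s\<close> unfolding r_def by linarith
    then have "g ! j = f (s + (j - (L + 1 - T)))"
      using that False by (simp add: g_def nth_append)
    also have "\<dots> = 0" using that False by (intro zeros) linarith
    finally show ?thesis .
  qed (simp add: g_def nth_append)
  \<comment> \<open>the period d moves the trailing zeros of g to the block starting at d - T\<close>
  have "f (r + (d - T) + i) = 0" if "i < T" for i
  proof -
    have "d \<le> L" using \<open>0 < d\<close> \<open>2 * d \<le> L + 1\<close> by linarith
    then have j: "d - T + i < L" using that \<open>T \<le> L\<close> by linarith
    then have "f (r + (d - T) + i) = g ! (d - T + i)" by (simp add: g_def nth_append add.assoc)
    also have "\<dots> = g ! (L + 1 - d + (d - T + i) mod d)"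
      using has_period_nth_last_period[OF \<open>has_period g d\<close>] \<open>d dvd L + 1\<close> \<open>0 < d\<close> j
      by (simp add: g_def)
    also have "\<dots> = 0"
    proof (rule g_zero)
      show "L + 1 - T \<le> L + 1 - d + (d - T + i) mod d"
      proof (cases "d \<le> T")
        case False
        then have "(d - T + i) mod d = d - T + i" using that by simp
        with False \<open>d \<le> L\<close> show ?thesis by linarith
      qed linarith
      show "L + 1 - d + (d - T + i) mod d < L + 1"
        using \<open>0 < d\<close> \<open>d \<le> L\<close> by (simp add: less_diff_conv2)
    qed
    finally show ?thesis .
  qed
  moreover have "N \<le> r + (d - T)" using \<open>N + L \<le> s\<close> unfolding r_def by simp
  ultimately show False using N[of "r + (d - T)"] by auto
qed

lemma prefix_fu_iter:
  assumes "m \<le> m'" shows "prefix (fu_iter k u m) (fu_iter k u m')"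
  using assms
proof (induction m' rule: dec_induct)
  case (step m')
  then show ?case by (simp add: fu_iter_def fstep_def)
qed simp

lemma nth_fu_iter_eq:
  assumes "i < length (fu_iter k u m)" and "i < length (fu_iter k u m')"
  shows "fu_iter k u m ! i = fu_iter k u m' ! i"
proof -
  have "fu_iter k u m1 ! i = fu_iter k u m2 ! i"
    if "m1 \<le> m2" and "i < length (fu_iter k u m1)" for m1 m2
    using prefix_fu_iter[OF \<open>m1 \<le> m2\<close>, of k u] that(2) by (auto elim!: prefixE simp: nth_append)
  with assms show ?thesis by (metis linorder_le_cases)
qed

lemma fu_iter_unstopped:
  assumes "\<And>m. \<not> stopped (length u) (fu_iter k u m)"
  shows "fu_iter k u m = map (\<lambda>i. fu_iter k u i ! i) [0..<length u + m]"
proof -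
  have len: "length (fu_iter k u m) = length u + m" for m
    using assms by (induction m) (simp_all add: fu_iter_def fstep_def)
  have "u \<noteq> []" using assms[of 0] by (auto simp: stopped_def window_def)
  show ?thesis
  proof (rule nth_equalityI)
    fix i assume "i < length (fu_iter k u m)"
    then show "fu_iter k u m ! i = map (\<lambda>i. fu_iter k u i ! i) [0..<length u + m] ! i"
      using nth_fu_iter_eq[of i k u m i] len \<open>u \<noteq> []\<close> by simp
  qed (simp add: len)
qed

lemma fu_iter_eventually_stopped:
  assumes "0 < k"
  shows "\<exists>m. stopped (length u) (fu_iter k u m)"
proof (rule ccontr)
  assume "\<nexists>m. stopped (length u) (fu_iter k u m)"
  then have unstopped: "\<And>m. \<not> stopped (length u) (fu_iter k u m)" by blast
  define n where "n = length u"
  define f where "f i = fu_iter k u i ! i" for i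
  have "n \<noteq> 0"
    using unstopped[of 0] by (auto simp: n_def stopped_def window_def)
  have word: "fu_iter k u m = map f [0..<n + m]" for m
    using fu_iter_unstopped[OF unstopped] unfolding f_def n_def by blast
  have window: "window n (fu_iter k u m) = map f [Suc m..<Suc m + (n - 1)]" for m
    using \<open>n \<noteq> 0\<close> by (simp add: word window_def drop_map add.commute)
  have next_letter: "f (n + m) = next_letter k n (fu_iter k u m)" for m
  proof -
    have "f (n + m) = fu_iter k u (Suc m) ! (n + m)" by (simp add: word del: upt_Suc)
    also have "fu_iter k u (Suc m) = fu_iter k u m @ [next_letter k n (fu_iter k u m)]"
      using unstopped[of m] by (simp add: fu_iter_def fstep_def n_def)
    finally show ?thesis using word[of m] by (simp add: nth_append)
  qed
  have "\<forall>\<^sub>F s in sequentially. f (s + (n - 1)) \<noteq> 0 \<longrightarrow>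
      \<not> primitive (map f [s..<s + (n - 1)] @ [0])"
    unfolding eventually_sequentially
  proof (intro exI[of _ 1] allI impI notI)
    fix s assume "1 \<le> s" and "f (s + (n - 1)) \<noteq> 0" and "primitive (map f [s..<s + (n - 1)] @ [0])"
    then obtain m where "s = Suc m" by (cases s) auto
    with \<open>primitive _\<close> \<open>0 < k\<close> have "next_letter k n (fu_iter k u m) = 0"
      by (simp add: next_letter_def window Least_eq_0)
    with \<open>f (s + (n - 1)) \<noteq> 0\<close> \<open>s = Suc m\<close> \<open>n \<noteq> 0\<close> show False
      using next_letter[of m] by (simp add: add.commute)
  qed
  from frequently_zero_block[OF this] obtain s where "1 \<le> s" and zeros: "\<forall>i<n - 1. f (s + i) = 0"
    unfolding frequently_sequentially by blast
  then obtain m where "s = Suc m" by (cases s) auto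
  have "window n (fu_iter k u m) = replicate (n - 1) 0"
    using zeros unfolding window \<open>s = Suc m\<close> by (intro nth_equalityI) (auto simp del: upt_Suc)
  with unstopped[of m] show False by (simp add: stopped_def n_def)
qed

text \<open>Neither the primitivity of u nor its letters matter: the construction stops from any
start word.\<close>

theorem lemma4:
  fixes k n :: nat and u :: "nat list"
  assumes "k \<ge> 2" and "n \<ge> 1" and "length u = n" and "set u \<subseteq> {0..<k}"
    and "primitive u"
  shows "\<exists>m. stopped n (fu_iter k u m) \<and>
           (\<forall>j<m. \<exists>a<k. primitive (window n (fu_iter k u j) @ [a]))"
proof -
  obtain m where "stopped n (fu_iter k u m)"
    using fu_iter_eventually_stopped[of k u] assms(1,3) by auto
  moreover have "\<exists>a<k. primitive (window n (fu_iter k u j) @ [a])" for j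
    using exists_primitive_snoc assms(1) by blast
  ultimately show ?thesis by blast
qed

end
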